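(* Let $k=2$. For every word $x_0\in\Sigma_2^*$ with $x_0\neq 111$, the sequence $x_{n+1}=\mathcal P_2(x_n)$ is eventually constant equal to $1001110$, i.e. there is $N$ with $x_n=1001110$ for all $n\ge N$; and for $x_0=111$ the sequence is constant equal to $111$. In particular, the only fixed points of $\mathcal P_2$ are $111$ and $1001110$, and $\mathcal P_2$ has no cycles of length $p\ge 2$.
   Context: Fix an integer $k\ge 2$ and the alphabet $\Sigma_k=\{0,1,\dots,k-1\}$. A word is a finite nonempty string of letters of $\Sigma_k$ (leading zeros allowed); $\Sigma_k^*$ denotes the set of words. For a word $x$, $|x|$ denotes its length and $|x|_i$ the number of occurrences of the letter $i$ in $x$. For a positive integer $c$, $[c]_k$ denotes its standard base-$k$ representation without leading zeros, viewed as a word over $\Sigma_k$; it has $\lfloor\log_k c\rfloor+1$ letters. The map $\mathcal P_k:\Sigma_k^*\to\Sigma_k^*$ is defined as follows: if $b_1>b_2>\dots>b_r$ are exactly the letters occurring in $x$ (i.e. those with $|x|_{b_j}\neq 0$), then $\mathcal P_k(x)=[|x|_{b_1}]_k\,b_1\,[|x|_{b_2}]_k\,b_2\cdots[|x|_{b_r}]_k\,b_r$ (concatenation). For $k=2$, e.g. $\mathcal P_2(111)=111$ (three 1's, written $11$ in binary, followed by the letter $1$). A fixed point is a word $x$ with $\mathcal P_k(x)=x$; a cycle of length $p$ is a list of $p$ distinct words $\overline x_1,\dots,\overline x_p$ with $\mathcal P_k(\overline x_i)=\overline x_{i+1}$ for $i<p$ and $\mathcal P_k(\overline x_p)=\overline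 x_1$. *)

theory Defs
  imports Main
begin

definition is_word :: "nat \<Rightarrow> nat list \<Rightarrow> bool" where
  "is_word k x \<longleftrightarrow> x \<noteq> [] \<and> set x \<subseteq> {..<k}"

text \<open>Standard base-k representation (most significant digit first, no leading zeros
  for c > 0); only used for positive c and k >= 2.\<close>
function base_repr :: "nat \<Rightarrow> nat \<Rightarrow> nat list" where
  "base_repr k c = (if k < 2 \<or> c < k then [c] else base_repr k (c div k) @ [c mod k])"
  by pat_completeness auto
termination
  by (relation "measure snd") (auto intro: div_less_dividend)

definition P :: "nat \<Rightarrow> nat list \<Rightarrow> nat list" where
  "P k x = concat (map (\<lambda>b. base_repr k (count_list x b) @ [b])
                       (filter (\<lambda>b. b \<in> set x) (rev [0..<k])))"

lemma "P 2 [1,1,1] = [1,1,1]" "P 2 [1,0,0,1,1,1,0] = [1,0,0,1,1,1,0]"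
  by (simp_all add: P_def upt_rec)

end

theory Submission
  imports Defs
begin

text \<open>\<open>\<P>\<^sub>2 x\<close> depends only on the numbers \<open>(a, b)\<close> of ones and zeros in \<open>x\<close>, so
  the dynamics factor through a map on pairs of naturals. Binary representations are
  logarithmically short, so this map strictly decreases \<open>a + b\<close> as long as \<open>a + b > 10\<close>;
  a finite computation shows that every pair with \<open>a + b \<le> 10\<close> except \<open>(0, 0)\<close> (no word)
  and \<open>(3, 0)\<close> (the word \<open>111\<close>) reaches the fixed pair \<open>(4, 3)\<close> of \<open>1001110\<close> within
  8 steps. Hence every orbit is eventually constant, which rules out cycles.\<close>

lemma base_repr_2: "base_repr 2 c = (if c < 2 then [c] else base_repr 2 (c div 2) @ [c mod 2])"
  by (subst base_repr.simps) simp

declare base_repr.simps [simp del] \<comment> \<open>it loops on symbolic arguments\<close>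

lemma set_base_repr:
  assumes "2 \<le> k"
  shows "set (base_repr k c) \<subseteq> {..<k}"
proof (induction c rule: less_induct)
  case (less c)
  show ?case
  proof (cases "c < k")
    case True
    then show ?thesis by (subst base_repr.simps) auto
  next
    case False
    then have "set (base_repr k (c div k)) \<subseteq> {..<k}"
      using assms less.IH[of "c div k"] by simp
    then show ?thesis using False assms by (subst base_repr.simps) auto
  qed
qed

lemma less_power_length_base_repr:
  assumes "2 \<le> k"
  shows "c < k ^ length (base_repr k c)"
proof (induction c rule: less_induct)
  case (less c)
  show ?case
  proof (cases "c < k")
    case True
    then show ?thesis by (subst base_repr.simps) auto
  next
    case False
    then have "c div k < k ^ length (base_repr k (c div k))"
      using assms less.IH[of "c div k"] by simp
    then have "c < k * k ^ length (base_repr k (c div k))"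
      using assms by (simp add: div_less_iff_less_mult mult.commute)
    then show ?thesis using False assms by (subst base_repr.simps) simp
  qed
qed

lemma length_base_repr_le:
  assumes "2 \<le> k" "0 < c"
  shows "length (base_repr k c) \<le> (c + 3) div 2"
  using assms(2)
proof (induction c rule: less_induct)
  case (less c)
  show ?case
  proof (cases "c < k")
    case True
    then show ?thesis using less.prems by (subst base_repr.simps) auto
  next
    case False
    have "length (base_repr k c) = Suc (length (base_repr k (c div k)))"
      using False assms(1) by (subst base_repr.simps) simp
    moreover have "length (base_repr k (c div k)) < (c + 3) div 2"
    proof (cases "c div k < 2")
      case True
      then have "c div k < k" using assms(1) by linarith
      then have "length (base_repr k (c div k)) = 1" by (subst base_repr.simps) simp
      then show ?thesis using False assms(1) by arith
    next
      case False
      have "k * (c div k) \<le> c" by (rule times_div_less_eq_dividend)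
      then have "2 * (c div k) \<le> c" using assms(1) by (meson le_trans mult_le_mono1)
      moreover have "length (base_repr k (c div k)) \<le> (c div k + 3) div 2"
        using False assms(1) less.IH[of "c div k"] less.prems by (simp add: div_less_dividend)
      ultimately show ?thesis using False by arith
    qed
    ultimately show ?thesis by arith
  qed
qed

fun word_of_counts :: "nat \<times> nat \<Rightarrow> nat list" where
  "word_of_counts (a, b) =
     (if a = 0 then [] else base_repr 2 a @ [1]) @ (if b = 0 then [] else base_repr 2 b @ [0])"

definition letter_counts :: "nat list \<Rightarrow> nat \<times> nat" where
  "letter_counts x = (count_list x 1, count_list x 0)"

definition count_step :: "nat \<times> nat \<Rightarrow> nat \<times> nat" where
  "count_step = letter_counts \<circ> word_of_counts"

lemma P2_eq_word_of_counts: "P 2 x = word_of_counts (letter_counts x)"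
proof -
  have "b \<in> set x \<longleftrightarrow> 0 < count_list x b" for b
    using count_list_0_iff[of x b] by auto
  moreover have "rev [0..<2] = [1::nat, 0]" by (simp add: upt_rec)
  ultimately show ?thesis by (simp add: P_def letter_counts_def)
qed

lemma funpow_P2:
  "(P 2 ^^ Suc n) x = word_of_counts ((count_step ^^ n) (letter_counts x))"
proof (induction n)
  case 0
  show ?case by (simp add: P2_eq_word_of_counts)
next
  case (Suc n)
  then show ?case by (simp add: P2_eq_word_of_counts count_step_def)
qed

lemma count_list_1_plus_0:
  "set x \<subseteq> {0, 1} \<Longrightarrow> count_list x 1 + count_list x (0::nat) = length x"
  by (induction x) auto

lemma set_word_of_counts: "set (word_of_counts p) \<subseteq> {0, 1}"
proof -
  have "set (base_repr 2 c) \<subseteq> {0, 1}" for c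
    using set_base_repr[of 2 c] by auto
  then show ?thesis by (cases p) auto
qed

lemma count_step_sum: "fst (count_step p) + snd (count_step p) = length (word_of_counts p)"
  using count_list_1_plus_0[OF set_word_of_counts]
  by (simp add: count_step_def letter_counts_def)

lemma length_word_of_counts_less:
  assumes "10 < a + b"
  shows "length (word_of_counts (a, b)) < a + b"
proof -
  have "0 < a \<Longrightarrow> length (base_repr 2 a) \<le> (a + 3) div 2"
    and "0 < b \<Longrightarrow> length (base_repr 2 b) \<le> (b + 3) div 2"
    by (simp_all add: length_base_repr_le)
  then show ?thesis using assms by auto
qed

lemma count_step_eq_0_0_iff: "count_step p = (0, 0) \<longleftrightarrow> p = (0, 0)"
proof -
  have "count_step p = (0, 0) \<longleftrightarrow> word_of_counts p = []"
    using count_step_sum[of p] by (auto simp: count_step_def letter_counts_def)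
  also have "\<dots> \<longleftrightarrow> p = (0, 0)"
    by (cases p) (auto simp: base_repr_2)
  finally show ?thesis .
qed

lemma count_step_eq_3_0_iff: "count_step p = (3, 0) \<longleftrightarrow> p = (3, 0)"
proof
  assume step: "count_step p = (3, 0)"
  obtain a b where p: "p = (a, b)" by fastforce
  have "0 \<notin> set (word_of_counts p)"
    using step by (simp add: count_step_def letter_counts_def count_list_0_iff)
  then have "b = 0" by (auto simp: p split: if_splits)
  have "a \<noteq> 0" using step count_step_eq_0_0_iff[of p] p \<open>b = 0\<close> by auto
  have digits: "0 \<notin> set (base_repr 2 a)"
    using \<open>0 \<notin> set (word_of_counts p)\<close> \<open>a \<noteq> 0\<close> p by simp
  have "length (word_of_counts p) = 3" using step count_step_sum[of p] by simp
  then have "length (base_repr 2 a) = 2" using \<open>a \<noteq> 0\<close> \<open>b = 0\<close> p by simp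
  moreover have "a < 2 ^ length (base_repr 2 a)" by (rule less_power_length_base_repr) simp
  ultimately have "a = 2 \<or> a = 3" using \<open>a \<noteq> 0\<close> by (auto simp: base_repr_2 split: if_splits)
  then show "p = (3, 0)" using digits p \<open>b = 0\<close> by (auto simp: base_repr_2)
qed (simp add: count_step_def letter_counts_def base_repr_2)

lemma count_step_4_3: "count_step (4, 3) = (4, 3)"
  by (simp add: count_step_def letter_counts_def base_repr_2)

lemma funpow_8: "(f ^^ 8) x = f (f (f (f (f (f (f (f x)))))))"
  by (simp add: numeral_eq_Suc)

lemma small_counts_reach_4_3:
  assumes "a + b \<le> 10" "(a, b) \<notin> {(0, 0), (3, 0)}"
  shows "(count_step ^^ 8) (a, b) = (4, 3)"
proof -
  have "a = 0 \<or> a = 1 \<or> a = 2 \<or> a = 3 \<or> a = 4 \<or> a = 5 \<or> a = 6 \<or> a = 7 \<or> a = 8 \<or> a = 9 \<or> a = 10"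
    using assms(1) by arith
  moreover have "b = 0 \<or> b = 1 \<or> b = 2 \<or> b = 3 \<or> b = 4 \<or> b = 5 \<or> b = 6 \<or> b = 7 \<or> b = 8 \<or> b = 9 \<or> b = 10"
    using assms(1) by arith
  ultimately show ?thesis using assms
    by (elim disjE) (simp_all add: funpow_8 count_step_def letter_counts_def base_repr_2)
qed

lemma funpow_fixed_point: "f x = x \<Longrightarrow> (f ^^ n) x = x"
  by (induction n) simp_all

lemma count_step_reaches_4_3:
  assumes "p \<notin> {(0, 0), (3, 0)}"
  shows "\<exists>n. (count_step ^^ n) p = (4, 3)"
  using assms
proof (induction "fst p + snd p" arbitrary: p rule: less_induct)
  case less
  obtain a b where p: "p = (a, b)" by fastforce
  show ?case
  proof (cases "a + b \<le> 10")
    case True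
    then show ?thesis using small_counts_reach_4_3 less.prems p by blast
  next
    case False
    have "fst (count_step p) + snd (count_step p) < fst p + snd p"
      using count_step_sum[of p] length_word_of_counts_less[of a b] False p by simp
    moreover have "count_step p \<notin> {(0, 0), (3, 0)}"
      using less.prems count_step_eq_0_0_iff count_step_eq_3_0_iff by auto
    ultimately obtain n where "(count_step ^^ n) (count_step p) = (4, 3)"
      using less.hyps by blast
    then have "(count_step ^^ Suc n) p = (4, 3)" by (simp add: funpow_swap1)
    then show ?thesis by blast
  qed
qed

lemma P2_111: "P 2 [1, 1, 1] = [1, 1, 1]"
  by (simp add: P_def upt_rec base_repr_2)

lemma P2_1001110: "P 2 [1, 0, 0, 1, 1, 1, 0] = [1, 0, 0, 1, 1, 1, 0]"
  by (simp add: P_def upt_rec base_repr_2)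

lemma letter_counts_eq_3_0:
  assumes "is_word 2 x" "letter_counts x = (3, 0)"
  shows "x = [1, 1, 1]"
proof -
  have "set x \<subseteq> {0, 1}" using assms(1) by (auto simp: is_word_def)
  moreover have "0 \<notin> set x" using assms(2) by (simp add: letter_counts_def count_list_0_iff)
  ultimately have "\<And>y. y \<in> set x \<Longrightarrow> y = 1" by auto
  moreover have "length x = 3"
    using count_list_1_plus_0[OF \<open>set x \<subseteq> {0, 1}\<close>] assms(2) by (simp add: letter_counts_def)
  ultimately have "x = replicate 3 1" by (simp add: replicate_eqI)
  then show ?thesis by (simp add: numeral_3_eq_3)
qed

lemma P2_converges:
  assumes "is_word 2 x" "x \<noteq> [1, 1, 1]"
  shows "\<exists>N. \<forall>n\<ge>N. (P 2 ^^ n) x = [1, 0, 0, 1, 1, 1, 0]"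
proof -
  have "set x \<subseteq> {0, 1}" "x \<noteq> []" using assms(1) by (auto simp: is_word_def)
  then have "letter_counts x \<noteq> (0, 0)"
    using count_list_1_plus_0[of x] by (auto simp: letter_counts_def)
  moreover have "letter_counts x \<noteq> (3, 0)" using assms letter_counts_eq_3_0 by blast
  ultimately obtain N where N: "(count_step ^^ N) (letter_counts x) = (4, 3)"
    using count_step_reaches_4_3 by blast
  have "(P 2 ^^ n) x = [1, 0, 0, 1, 1, 1, 0]" if "Suc N \<le> n" for n
  proof -
    define m where "m = n - Suc N"
    have "(count_step ^^ (m + N)) (letter_counts x) = (4, 3)"
      using N by (simp add: funpow_add funpow_fixed_point count_step_4_3)
    moreover have "n = Suc (m + N)" using that by (simp add: m_def)
    ultimately show ?thesis by (simp only: funpow_P2) (simp add: base_repr_2)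
  qed
  then show ?thesis by blast
qed

lemma P2_eventually_constant:
  assumes "is_word 2 x"
  shows "\<exists>N c. \<forall>n\<ge>N. (P 2 ^^ n) x = c"
  using P2_converges[OF assms] funpow_fixed_point[of "P 2", OF P2_111] by blast

lemma funpow_cycle_not_eventually_constant:
  assumes "2 \<le> length xs" "distinct xs"
    and cycle: "\<forall>i<length xs. f (xs ! i) = xs ! ((i + 1) mod length xs)"
  shows "\<not> (\<exists>N c. \<forall>n\<ge>N. (f ^^ n) (xs ! 0) = c)"
proof
  assume "\<exists>N c. \<forall>n\<ge>N. (f ^^ n) (xs ! 0) = c"
  then obtain N c where const: "\<And>n. N \<le> n \<Longrightarrow> (f ^^ n) (xs ! 0) = c" by blast
  let ?p = "length xs"
  have "0 < ?p" using assms(1) by linarith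
  have orbit: "(f ^^ j) (xs ! 0) = xs ! (j mod ?p)" for j
  proof (induction j)
    case (Suc j)
    have "j mod ?p < ?p" using \<open>0 < ?p\<close> by simp
    then show ?case using Suc cycle by (simp add: mod_Suc_eq)
  qed (use assms(1) in simp)
  have "N \<le> N * ?p" using \<open>0 < ?p\<close> by (simp add: Suc_leI)
  then have "xs ! (N * ?p mod ?p) = c" and "xs ! (Suc (N * ?p) mod ?p) = c"
    using const orbit by (metis le_SucI)+
  moreover have "Suc (N * ?p) mod ?p = 1" using assms(1) by (simp add: mod_Suc)
  ultimately have "xs ! 0 = xs ! 1" by simp
  then show False using assms(1,2) \<open>0 < ?p\<close> nth_eq_iff_index_eq[of xs 0 1] by simp
qed

theorem corollary1:
  shows "(\<forall>x0. is_word 2 x0 \<and> x0 \<noteq> [1,1,1] \<longrightarrow>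
            (\<exists>N. \<forall>n\<ge>N. (P 2 ^^ n) x0 = [1,0,0,1,1,1,0]))
       \<and> (\<forall>n. (P 2 ^^ n) [1,1,1] = [1,1,1])
       \<and> {x. is_word 2 x \<and> P 2 x = x} = {[1,1,1], [1,0,0,1,1,1,0]}
       \<and> (\<forall>p xs. p \<ge> 2 \<longrightarrow> length xs = p \<longrightarrow> distinct xs \<longrightarrow> (\<forall>x\<in>set xs. is_word 2 x) \<longrightarrow>
            \<not> (\<forall>i<p. P 2 (xs ! i) = xs ! ((i + 1) mod p)))"
proof (intro conjI allI impI)
  show "\<exists>N. \<forall>n\<ge>N. (P 2 ^^ n) x0 = [1,0,0,1,1,1,0]" if "is_word 2 x0 \<and> x0 \<noteq> [1,1,1]" for x0
    using P2_converges that by blast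
  show "(P 2 ^^ n) [1,1,1] = [1,1,1]" for n
    using P2_111 by (rule funpow_fixed_point)
  have "x = [1,0,0,1,1,1,0]" if "is_word 2 x" "P 2 x = x" "x \<noteq> [1,1,1]" for x
    using P2_converges[OF that(1,3)] funpow_fixed_point[of "P 2", OF that(2)] by (metis le_refl)
  then show "{x. is_word 2 x \<and> P 2 x = x} = {[1,1,1], [1,0,0,1,1,1,0]}"
    using P2_111 P2_1001110 by (auto simp: is_word_def)
  fix p :: nat and xs :: "nat list list"
  assume "2 \<le> p" "length xs = p" "distinct xs" "\<forall>x\<in>set xs. is_word 2 x"
  then show "\<not> (\<forall>i<p. P 2 (xs ! i) = xs ! ((i + 1) mod p))"
    using funpow_cycle_not_eventually_constant[of xs "P 2"] P2_eventually_constant[of "xs ! 0"]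
    by auto
qed

end
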